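(* Let $s\ge1$, let $P_0(\xi)$ be an $s$-hypoelliptic polynomial on $\mathbb{R}^d$ of order $m$, and let $P_0,P_1,\dots,P_r$ be a basis of the (finite-dimensional) vector space of polynomials weaker than $P_0$. Let $P=\sum_{j=0}^rc_j(x)P_j(D/2\pi)$ with symbol $p(x,\xi)=\sum_{j=0}^rc_j(x)P_j(\xi)$, where $c_j\in G^1_{ap}(\mathbb{R}^d)$ for $j=0,\dots,r$, and assume there exist $\epsilon>0$, $A\ge0$ such that $|p(x,\xi)|\ge\epsilon|P_0(\xi)|$ for all $|\xi|\ge A$ and $x\in\mathbb{R}^d$. Then $P$ has constant strength.
   Context: $D=-i\nabla$, so $P_j(D/2\pi)$ is the constant-coefficient differential operator whose symbol (with respect to $e^{2\pi i x\cdot\xi}$) is $P_j(\xi)$. A polynomial $Q(\xi)$ on $\mathbb{R}^d$ is $s$-hypoelliptic ($1\le s<\infty$) if for some $\rho$ with $0<\rho\le1$, $\rho\ge1/s$, and constants $C>0$, $A\ge0$: $|\partial^\beta Q(\xi)|\le C|Q(\xi)|(1+|\xi|)^{-\rho|\beta|}$ for all $\beta\in\mathbb{N}^d$ and $|\xi|\ge A$. For a polynomial $Q$ set $\tilde Q(\xi)=(\sum_{\alpha\in\mathbb{N}^d}|\partial^\alpha Q(\xi)|^2)^{1/2}$. $Q$ is weaker than $P$ if $\tilde Q(\xi)\le C\tilde P(\xi)$ for all $\xi$ and some $C>0$; $P,Q$ are equally strong if each is weaker than the other. A differential operator with symbol $p(x,\xi)$ has constant strength if $p(x,\cdot)$ and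 $p(y,\cdot)$ are equally strong for all $x,y\in\mathbb{R}^d$. $G^1_{ap}(\mathbb{R}^d)$ is the set of $f\in C^\infty(\mathbb{R}^d)$ such that every $\partial^\alpha f$ is (Bohr) uniformly almost periodic and for some $C>0$, $|\partial^\alpha f(x)|\le C^{1+|\alpha|}\alpha!$ for all $x\in\mathbb{R}^d$, $\alpha\in\mathbb{N}^d$. *)

theory Defs
  imports "HOL-Analysis.Analysis"
begin

text \<open>Polynomials on R^d (d = CARD('d)) with complex coefficients, represented by their
coefficient function on multi-indices. The variable is xi :: real^'d.\<close>

type_synonym 'd mindex = "'d \<Rightarrow> nat"
type_synonym 'd mpoly = "'d mindex \<Rightarrow> complex"

definition is_mpoly :: "('d::finite) mpoly \<Rightarrow> bool" where
  "is_mpoly a \<longleftrightarrow> finite {\<alpha>. a \<alpha> \<noteq> 0}"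

definition mindex_abs :: "('d::finite) mindex \<Rightarrow> nat" where
  "mindex_abs \<alpha> = (\<Sum>i\<in>UNIV. \<alpha> i)"

definition mindex_fact :: "('d::finite) mindex \<Rightarrow> real" where
  "mindex_fact \<alpha> = (\<Prod>i\<in>UNIV. fact (\<alpha> i))"

definition mpdegree :: "('d::finite) mpoly \<Rightarrow> nat" where
  "mpdegree a = Max (insert 0 (mindex_abs ` {\<alpha>. a \<alpha> \<noteq> 0}))"

definition mpeval :: "('d::finite) mpoly \<Rightarrow> real^'d \<Rightarrow> complex" where
  "mpeval a \<xi> = (\<Sum>\<alpha>\<in>{\<alpha>. a \<alpha> \<noteq> 0}. a \<alpha> * (\<Prod>i\<in>UNIV. complex_of_real ((\<xi> $ i) ^ \<alpha> i)))"

definition mpderiv :: "('d::finite) mindex \<Rightarrow> 'd mpoly \<Rightarrow> 'd mpoly" where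
  "mpderiv \<beta> a = (\<lambda>\<alpha>. of_nat (\<Prod>i\<in>UNIV. fact (\<alpha> i + \<beta> i) div fact (\<alpha> i)) * a (\<lambda>i. \<alpha> i + \<beta> i))"

text \<open>tilde Q(xi) = (sum over all beta of |d^beta Q(xi)|^2)^(1/2); only finitely many beta give a
nonzero derivative polynomial, the others contribute 0.\<close>
definition mptilde :: "('d::finite) mpoly \<Rightarrow> real^'d \<Rightarrow> real" where
  "mptilde a \<xi> = sqrt (\<Sum>\<beta>\<in>{\<beta>. mpderiv \<beta> a \<noteq> (\<lambda>_. 0)}. (cmod (mpeval (mpderiv \<beta> a) \<xi>))\<^sup>2)"

definition weaker :: "('d::finite) mpoly \<Rightarrow> 'd mpoly \<Rightarrow> bool" where
  "weaker Q P \<longleftrightarrow> (\<exists>C>0. \<forall>\<xi>. mptilde Q \<xi> \<le> C * mptilde P \<xi>)"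

definition equally_strong :: "('d::finite) mpoly \<Rightarrow> 'd mpoly \<Rightarrow> bool" where
  "equally_strong P Q \<longleftrightarrow> weaker P Q \<and> weaker Q P"

definition s_hypoelliptic :: "real \<Rightarrow> ('d::finite) mpoly \<Rightarrow> bool" where
  "s_hypoelliptic s Q \<longleftrightarrow> (\<exists>\<rho> C A. 0 < \<rho> \<and> \<rho> \<le> 1 \<and> \<rho> \<ge> 1 / s \<and> C > 0 \<and> A \<ge> 0 \<and>
     (\<forall>\<beta> \<xi>. norm \<xi> \<ge> A \<longrightarrow>
        cmod (mpeval (mpderiv \<beta> Q) \<xi>) \<le> C * cmod (mpeval Q \<xi>) * (1 + norm \<xi>) powr (- \<rho> * real (mindex_abs \<beta>))))"

definition partial_dir :: "'d::finite \<Rightarrow> (real^'d \<Rightarrow> complex) \<Rightarrow> real^'d \<Rightarrow> complex" where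
  "partial_dir i f x = vector_derivative (\<lambda>t. f (x + t *\<^sub>R axis i 1)) (at 0)"

definition iter_partial :: "('d::finite) list \<Rightarrow> (real^'d \<Rightarrow> complex) \<Rightarrow> real^'d \<Rightarrow> complex" where
  "iter_partial ds f = foldr partial_dir ds f"

definition smooth_fun :: "(real^('d::finite) \<Rightarrow> complex) \<Rightarrow> bool" where
  "smooth_fun f \<longleftrightarrow> (\<forall>ds. iter_partial ds f differentiable_on UNIV \<and> continuous_on UNIV (iter_partial ds f))"

text \<open>\<partial>^\<alpha> f: iterated partials in any order with multiplicities \<alpha> (order irrelevant for smooth f).\<close>
definition dpow :: "('d::finite) mindex \<Rightarrow> (real^'d \<Rightarrow> complex) \<Rightarrow> real^'d \<Rightarrow> complex" where
  "dpow \<alpha> f = iter_partial (SOME ds. \<forall>i. count_list ds i = \<alpha> i) f"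

definition almost_periodic :: "(real^('d::finite) \<Rightarrow> complex) \<Rightarrow> bool" where
  "almost_periodic f \<longleftrightarrow> continuous_on UNIV f \<and>
     (\<forall>\<epsilon>>0. \<exists>L>0. \<forall>a. \<exists>\<tau>. dist \<tau> a \<le> L \<and> (\<forall>x. cmod (f (x + \<tau>) - f x) < \<epsilon>))"

definition G1ap :: "(real^('d::finite) \<Rightarrow> complex) set" where
  "G1ap = {f. smooth_fun f \<and> (\<forall>\<alpha>. almost_periodic (dpow \<alpha> f)) \<and>
     (\<exists>C>0. \<forall>\<alpha> x. cmod (dpow \<alpha> f x) \<le> C ^ (1 + mindex_abs \<alpha>) * mindex_fact \<alpha>)}"

definition symbol :: "nat \<Rightarrow> (nat \<Rightarrow> real^('d::finite) \<Rightarrow> complex) \<Rightarrow> (nat \<Rightarrow> 'd mpoly) \<Rightarrow> real^'d \<Rightarrow> 'd mpoly" where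
  "symbol r c Ps x = (\<lambda>\<alpha>. \<Sum>j\<le>r. c j x * Ps j \<alpha>)"

definition constant_strength :: "(real^('d::finite) \<Rightarrow> 'd mpoly) \<Rightarrow> bool" where
  "constant_strength p \<longleftrightarrow> (\<forall>x y. equally_strong (p x) (p y))"

end

theory Submission imports Defs begin

(* Write P0 = Ps 0 and p_x = symbol r c Ps x = \<Sum>j c_j(x) P_j for the
   symbol at the point x.  Constant strength follows once every p_x is equally strong
   as P0, since "weaker" is transitive.
   - p_x is weaker than P0: the weight tilde is subadditive and homogeneous on linear
     combinations, so tilde p_x \<le> \<Sum>j |c_j(x)| tilde P_j \<le> C tilde P0.
   - P0 is weaker than p_x: hypoellipticity of P0 (with \<rho> > 0) gives
     tilde P0 \<le> K |P0| for large \<xi>, and the ellipticity hypothesis |p_x| \<ge> \<epsilon> |P0|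
     for large \<xi> turns this into tilde P0 \<le> (K/\<epsilon>) tilde p_x there; on the remaining
     compact ball tilde P0 is bounded while tilde p_x is bounded below by a positive
     constant, because a nonzero polynomial has a nonzero constant top derivative. *)

section \<open>Derivatives, evaluation and linear combinations of polynomials\<close>

definition deriv_support :: "('d::finite) mpoly \<Rightarrow> 'd mindex set" where
  "deriv_support a = {\<beta>. mpderiv \<beta> a \<noteq> (\<lambda>_. 0)}"

lemma mpderiv_zero_index: "mpderiv (\<lambda>_. 0) a = a"
  by (simp add: mpderiv_def)

lemma mpderiv_lincomb:
  "mpderiv \<beta> (\<lambda>\<alpha>. \<Sum>j\<in>J. f j * P j \<alpha>) = (\<lambda>\<alpha>. \<Sum>j\<in>J. f j * mpderiv \<beta> (P j) \<alpha>)"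
  by (simp add: mpderiv_def sum_distrib_left sum_distrib_right mult_ac)

text \<open>Derivatives of polynomials are polynomials: shifting multi-indices by \<beta> is injective.\<close>
lemma is_mpoly_mpderiv:
  assumes "is_mpoly a" shows "is_mpoly (mpderiv \<beta> a)"
proof -
  have inj: "inj (\<lambda>\<alpha>::'a mindex. \<lambda>i. \<alpha> i + \<beta> i)"
    by (auto simp: inj_def fun_eq_iff)
  have "{\<alpha>. mpderiv \<beta> a \<alpha> \<noteq> 0} \<subseteq> (\<lambda>\<alpha> i. \<alpha> i + \<beta> i) -` {\<alpha>. a \<alpha> \<noteq> 0}"
    by (auto simp: mpderiv_def)
  moreover have "finite ((\<lambda>\<alpha> i. \<alpha> i + \<beta> i) -` {\<alpha>. a \<alpha> \<noteq> 0})"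
    using assms inj unfolding is_mpoly_def by (intro finite_vimageI) auto
  ultimately show ?thesis unfolding is_mpoly_def by (rule finite_subset)
qed

lemma is_mpoly_lincomb:
  assumes "finite J" "\<forall>j\<in>J. is_mpoly (P j)"
  shows "is_mpoly (\<lambda>\<alpha>. \<Sum>j\<in>J. f j * P j \<alpha>)"
proof -
  have "{\<alpha>. (\<Sum>j\<in>J. f j * P j \<alpha>) \<noteq> 0} \<subseteq> (\<Union>j\<in>J. {\<alpha>. P j \<alpha> \<noteq> 0})"
    by (auto intro: ccontr)
  moreover have "finite (\<Union>j\<in>J. {\<alpha>. P j \<alpha> \<noteq> 0})"
    using assms by (auto simp: is_mpoly_def)
  ultimately show ?thesis unfolding is_mpoly_def by (rule finite_subset)
qed

lemma mpeval_superset: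
  assumes "finite T" "{\<alpha>. a \<alpha> \<noteq> 0} \<subseteq> T"
  shows "mpeval a \<xi> = (\<Sum>\<alpha>\<in>T. a \<alpha> * (\<Prod>i\<in>UNIV. complex_of_real ((\<xi> $ i) ^ \<alpha> i)))"
  unfolding mpeval_def using assms by (intro sum.mono_neutral_left) auto

lemma mpeval_zero_poly: "mpeval (\<lambda>_. 0) \<xi> = 0"
  by (simp add: mpeval_def)

lemma mpeval_lincomb:
  assumes "finite J" "\<forall>j\<in>J. is_mpoly (P j)"
  shows "mpeval (\<lambda>\<alpha>. \<Sum>j\<in>J. f j * P j \<alpha>) \<xi> = (\<Sum>j\<in>J. f j * mpeval (P j) \<xi>)"
proof -
  define T where "T = (\<Union>j\<in>J. {\<alpha>. P j \<alpha> \<noteq> 0})"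
  define mono where "mono \<alpha> = (\<Prod>i\<in>UNIV. complex_of_real ((\<xi> $ i) ^ \<alpha> i))" for \<alpha>
  have T: "finite T" using assms by (auto simp: is_mpoly_def T_def)
  have "{\<alpha>. (\<Sum>j\<in>J. f j * P j \<alpha>) \<noteq> 0} \<subseteq> T"
    unfolding T_def by (auto intro: ccontr)
  then have "mpeval (\<lambda>\<alpha>. \<Sum>j\<in>J. f j * P j \<alpha>) \<xi> = (\<Sum>\<alpha>\<in>T. (\<Sum>j\<in>J. f j * P j \<alpha>) * mono \<alpha>)"
    unfolding mono_def by (rule mpeval_superset[OF T])
  also have "\<dots> = (\<Sum>j\<in>J. f j * (\<Sum>\<alpha>\<in>T. P j \<alpha> * mono \<alpha>))"
    by (simp add: sum_distrib_right sum_distrib_left mult_ac sum.swap[of _ T J])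
  also have "\<dots> = (\<Sum>j\<in>J. f j * mpeval (P j) \<xi>)"
    unfolding mono_def
    by (intro sum.cong refl arg_cong2[where f="(*)"] mpeval_superset[symmetric] T)
       (auto simp: T_def)
  finally show ?thesis .
qed

text \<open>Only finitely many derivatives of a polynomial are nonzero: \<beta> must lie below some
  multi-index of the support.\<close>
lemma finite_deriv_support:
  assumes "is_mpoly a" shows "finite (deriv_support a)"
proof -
  have "deriv_support a \<subseteq> (\<Union>\<gamma>\<in>{\<alpha>. a \<alpha> \<noteq> 0}. Pi\<^sub>E UNIV (\<lambda>i. {..\<gamma> i}))"
  proof
    fix \<beta> assume "\<beta> \<in> deriv_support a"
    then obtain \<alpha> where "mpderiv \<beta> a \<alpha> \<noteq> 0" by (auto simp: deriv_support_def fun_eq_iff)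
    hence "a (\<lambda>i. \<alpha> i + \<beta> i) \<noteq> 0" by (auto simp: mpderiv_def)
    thus "\<beta> \<in> (\<Union>\<gamma>\<in>{\<alpha>. a \<alpha> \<noteq> 0}. Pi\<^sub>E UNIV (\<lambda>i. {..\<gamma> i}))"
      by (intro UN_I[of "\<lambda>i. \<alpha> i + \<beta> i"]) auto
  qed
  moreover have "finite (\<Union>\<gamma>\<in>{\<alpha>. a \<alpha> \<noteq> 0}. Pi\<^sub>E UNIV (\<lambda>i. {..\<gamma> i}))"
    using assms by (auto simp: is_mpoly_def intro!: finite_PiE)
  ultimately show ?thesis by (rule finite_subset)
qed

lemma deriv_support_lincomb:
  "deriv_support (\<lambda>\<alpha>. \<Sum>j\<in>J. f j * P j \<alpha>) \<subseteq> (\<Union>j\<in>J. deriv_support (P j))"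
  by (auto simp: deriv_support_def mpderiv_lincomb fun_eq_iff intro: ccontr)

section \<open>Basic estimates for the weight tilde\<close>

lemma mptilde_as_L2_set:
  assumes "finite S" "deriv_support a \<subseteq> S"
  shows "mptilde a \<xi> = L2_set (\<lambda>\<beta>. cmod (mpeval (mpderiv \<beta> a) \<xi>)) S"
proof -
  have "(\<Sum>\<beta>\<in>deriv_support a. (cmod (mpeval (mpderiv \<beta> a) \<xi>))\<^sup>2)
      = (\<Sum>\<beta>\<in>S. (cmod (mpeval (mpderiv \<beta> a) \<xi>))\<^sup>2)"
    using assms
    by (intro sum.mono_neutral_left) (auto simp: deriv_support_def mpeval_zero_poly)
  thus ?thesis by (simp add: mptilde_def L2_set_def deriv_support_def)
qed

lemma mptilde_nonneg: "0 \<le> mptilde a \<xi>"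
  by (simp add: mptilde_def sum_nonneg)

lemma mpderiv_le_mptilde:
  assumes "is_mpoly a" shows "cmod (mpeval (mpderiv \<beta> a) \<xi>) \<le> mptilde a \<xi>"
proof (cases "\<beta> \<in> deriv_support a")
  case True
  then show ?thesis
    using mptilde_as_L2_set[OF finite_deriv_support[OF assms] order_refl]
      member_le_L2_set[OF finite_deriv_support[OF assms] True]
    by metis
next
  case False
  hence "mpderiv \<beta> a = (\<lambda>_. 0)" by (auto simp: deriv_support_def)
  thus ?thesis by (simp add: mpeval_zero_poly mptilde_nonneg)
qed

lemma mpeval_le_mptilde:
  assumes "is_mpoly a" shows "cmod (mpeval a \<xi>) \<le> mptilde a \<xi>"
  using mpderiv_le_mptilde[OF assms, of "\<lambda>_. 0"] by (simp add: mpderiv_zero_index)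

lemma mindex_abs_add: "mindex_abs (\<lambda>i. \<gamma> i + \<alpha> i) = mindex_abs \<gamma> + mindex_abs \<alpha>"
  by (simp add: mindex_abs_def sum.distrib)

lemma mindex_abs_pos:
  assumes "\<gamma> \<noteq> (\<lambda>_. 0)" shows "0 < mindex_abs (\<gamma>::('d::finite) mindex)"
proof -
  obtain i where "0 < \<gamma> i" using assms by auto
  also have "\<gamma> i \<le> mindex_abs \<gamma>"
    unfolding mindex_abs_def by (rule member_le_sum) auto
  finally show ?thesis .
qed

text \<open>Differentiating a nonzero polynomial along a multi-index \<alpha> of maximal length in its
  support yields the nonzero constant \<alpha>! a_\<alpha>.\<close>
lemma mpderiv_top_constant:
  assumes "is_mpoly a" "a \<noteq> (\<lambda>_. 0)"
  obtains \<alpha> k where "k \<noteq> 0" "mpderiv \<alpha> a = (\<lambda>\<gamma>. if \<gamma> = (\<lambda>_. 0) then k else 0)"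
proof -
  define T where "T = {\<alpha>. a \<alpha> \<noteq> 0}"
  have "finite T" "T \<noteq> {}" using assms by (auto simp: is_mpoly_def T_def)
  then have "Max (mindex_abs ` T) \<in> mindex_abs ` T" by (intro Max_in) auto
  then obtain \<alpha> where \<alpha>: "\<alpha> \<in> T" "mindex_abs \<alpha> = Max (mindex_abs ` T)" by auto
  have max: "mindex_abs \<gamma> \<le> mindex_abs \<alpha>" if "\<gamma> \<in> T" for \<gamma>
    using \<alpha>(2) \<open>finite T\<close> that by simp
  define k where "k = of_nat (\<Prod>i\<in>UNIV. fact (\<alpha> i) :: nat) * a \<alpha>"
  have "k \<noteq> 0" using \<alpha> by (simp add: k_def T_def)
  moreover have "mpderiv \<alpha> a \<gamma> = (if \<gamma> = (\<lambda>_. 0) then k else 0)" for \<gamma>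
  proof (cases "\<gamma> = (\<lambda>_. 0)")
    case True thus ?thesis by (simp add: mpderiv_def k_def)
  next
    case False
    have "(\<lambda>i. \<gamma> i + \<alpha> i) \<notin> T"
      using max[of "\<lambda>i. \<gamma> i + \<alpha> i"] mindex_abs_pos[OF False] by (auto simp: mindex_abs_add)
    thus ?thesis using False by (simp add: mpderiv_def T_def)
  qed
  ultimately show ?thesis using that by blast
qed

lemma mptilde_lower_bound:
  assumes "is_mpoly a" "a \<noteq> (\<lambda>_. 0)"
  obtains \<kappa> where "\<kappa> > 0" "\<And>\<xi>. \<kappa> \<le> mptilde a \<xi>"
proof -
  obtain \<alpha> k where k: "k \<noteq> 0" "mpderiv \<alpha> a = (\<lambda>\<gamma>. if \<gamma> = (\<lambda>_. 0) then k else 0)"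
    using mpderiv_top_constant[OF assms] .
  have "{\<gamma>. mpderiv \<alpha> a \<gamma> \<noteq> 0} = {(\<lambda>_. 0)}" using k by auto
  then have "mpeval (mpderiv \<alpha> a) \<xi> = k" for \<xi>
    by (simp add: mpeval_def k(2))
  then show ?thesis
    using that[of "cmod k"] mpderiv_le_mptilde[OF assms(1), of \<alpha>] k(1) by auto
qed

lemma continuous_on_mptilde:
  assumes "is_mpoly a" shows "continuous_on UNIV (mptilde a)"
proof -
  have "mptilde a = (\<lambda>\<xi>. sqrt (\<Sum>\<beta>\<in>deriv_support a. (cmod (mpeval (mpderiv \<beta> a) \<xi>))\<^sup>2))"
    by (simp add: mptilde_def deriv_support_def fun_eq_iff)
  thus ?thesis unfolding mpeval_def by (simp add: continuous_intros)
qed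

lemma mptilde_bounded_on_ball:
  assumes "is_mpoly a"
  obtains M where "\<And>\<xi>. norm \<xi> \<le> B \<Longrightarrow> mptilde a \<xi> \<le> M"
proof -
  have "compact (mptilde a ` cball 0 B)"
    by (intro compact_continuous_image continuous_on_subset[OF continuous_on_mptilde[OF assms]])
       auto
  then obtain M where M: "\<forall>y\<in>mptilde a ` cball 0 B. norm y \<le> M"
    using compact_imp_bounded bounded_iff by blast
  have "mptilde a \<xi> \<le> M" if "norm \<xi> \<le> B" for \<xi>
  proof -
    have "mptilde a \<xi> \<in> mptilde a ` cball 0 B" using that by (simp add: mem_cball_0)
    with M have "norm (mptilde a \<xi>) \<le> M" by blast
    then show ?thesis by simp
  qed
  then show ?thesis using that by blast
qed

lemma L2_set_sum_le:
  "L2_set (\<lambda>\<beta>. cmod (\<Sum>j\<in>J. g j \<beta>)) S \<le> (\<Sum>j\<in>J. L2_set (\<lambda>\<beta>. cmod (g j \<beta>)) S)"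
proof (induction J rule: infinite_finite_induct)
  case (insert x F)
  have "L2_set (\<lambda>\<beta>. cmod (\<Sum>j\<in>insert x F. g j \<beta>)) S
      \<le> L2_set (\<lambda>\<beta>. cmod (g x \<beta>) + cmod (\<Sum>j\<in>F. g j \<beta>)) S"
    using insert by (intro L2_set_mono) (auto intro: norm_triangle_ineq)
  also have "\<dots> \<le> L2_set (\<lambda>\<beta>. cmod (g x \<beta>)) S + L2_set (\<lambda>\<beta>. cmod (\<Sum>j\<in>F. g j \<beta>)) S"
    by (rule L2_set_triangle_ineq)
  also have "\<dots> \<le> (\<Sum>j\<in>insert x F. L2_set (\<lambda>\<beta>. cmod (g j \<beta>)) S)"
    using insert by simp
  finally show ?case .
qed (simp_all add: L2_set_def)

lemma mptilde_lincomb_le: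
  assumes "finite J" "\<forall>j\<in>J. is_mpoly (P j)"
  shows "mptilde (\<lambda>\<alpha>. \<Sum>j\<in>J. f j * P j \<alpha>) \<xi> \<le> (\<Sum>j\<in>J. cmod (f j) * mptilde (P j) \<xi>)"
proof -
  define S where "S = (\<Union>j\<in>J. deriv_support (P j))"
  have S: "finite S" using assms finite_deriv_support by (auto simp: S_def)
  have "mptilde (\<lambda>\<alpha>. \<Sum>j\<in>J. f j * P j \<alpha>) \<xi>
      = L2_set (\<lambda>\<beta>. cmod (mpeval (mpderiv \<beta> (\<lambda>\<alpha>. \<Sum>j\<in>J. f j * P j \<alpha>)) \<xi>)) S"
    using deriv_support_lincomb unfolding S_def by (intro mptilde_as_L2_set S[unfolded S_def])
  also have "\<dots> = L2_set (\<lambda>\<beta>. cmod (\<Sum>j\<in>J. f j * mpeval (mpderiv \<beta> (P j)) \<xi>)) S"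
    unfolding mpderiv_lincomb using assms
    by (intro L2_set_cong refl arg_cong[where f=cmod] mpeval_lincomb)
       (auto intro: is_mpoly_mpderiv)
  also have "\<dots> \<le> (\<Sum>j\<in>J. L2_set (\<lambda>\<beta>. cmod (f j * mpeval (mpderiv \<beta> (P j)) \<xi>)) S)"
    by (rule L2_set_sum_le)
  also have "\<dots> = (\<Sum>j\<in>J. cmod (f j) * mptilde (P j) \<xi>)"
  proof (intro sum.cong refl)
    fix j assume "j \<in> J"
    then have "deriv_support (P j) \<subseteq> S" by (auto simp: S_def)
    then show "L2_set (\<lambda>\<beta>. cmod (f j * mpeval (mpderiv \<beta> (P j)) \<xi>)) S
        = cmod (f j) * mptilde (P j) \<xi>"
      by (simp add: mptilde_as_L2_set[OF S] L2_set_right_distrib norm_mult)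
  qed
  finally show ?thesis .
qed

section \<open>Comparison of strength\<close>

lemma weaker_trans: "weaker a b \<Longrightarrow> weaker b c \<Longrightarrow> weaker a c"
  unfolding weaker_def
proof (elim exE conjE)
  fix C1 C2 assume C1: "C1 > 0" "\<forall>\<xi>. mptilde a \<xi> \<le> C1 * mptilde b \<xi>"
    and C2: "C2 > 0" "\<forall>\<xi>. mptilde b \<xi> \<le> C2 * mptilde c \<xi>"
  have "mptilde a \<xi> \<le> (C1 * C2) * mptilde c \<xi>" for \<xi>
  proof -
    have "mptilde a \<xi> \<le> C1 * mptilde b \<xi>" using C1 by blast
    also have "\<dots> \<le> C1 * (C2 * mptilde c \<xi>)" using C1 C2 by (intro mult_left_mono) auto
    finally show ?thesis by (simp add: mult.assoc)
  qed
  then show "\<exists>C>0. \<forall>\<xi>. mptilde a \<xi> \<le> C * mptilde c \<xi>"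
    using C1 C2 by (intro exI[of _ "C1 * C2"]) auto
qed

lemma weaker_lincomb:
  assumes "finite J" "\<forall>j\<in>J. is_mpoly (Q j) \<and> weaker (Q j) P"
  shows "weaker (\<lambda>\<alpha>. \<Sum>j\<in>J. f j * Q j \<alpha>) P"
proof -
  have "\<forall>j\<in>J. \<exists>C>0. \<forall>\<xi>. mptilde (Q j) \<xi> \<le> C * mptilde P \<xi>"
    using assms(2) by (auto simp: weaker_def)
  then obtain C where C: "\<And>j. j \<in> J \<Longrightarrow> C j > 0"
    "\<And>j \<xi>. j \<in> J \<Longrightarrow> mptilde (Q j) \<xi> \<le> C j * mptilde P \<xi>"
    by metis
  define D where "D = 1 + (\<Sum>j\<in>J. cmod (f j) * C j)"
  have weights_nonneg: "0 \<le> (\<Sum>j\<in>J. cmod (f j) * C j)"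
    using C(1) by (intro sum_nonneg) (simp add: less_imp_le)
  have "mptilde (\<lambda>\<alpha>. \<Sum>j\<in>J. f j * Q j \<alpha>) \<xi> \<le> D * mptilde P \<xi>" for \<xi>
  proof -
    have "mptilde (\<lambda>\<alpha>. \<Sum>j\<in>J. f j * Q j \<alpha>) \<xi> \<le> (\<Sum>j\<in>J. cmod (f j) * mptilde (Q j) \<xi>)"
      using assms by (intro mptilde_lincomb_le) auto
    also have "\<dots> \<le> (\<Sum>j\<in>J. cmod (f j) * (C j * mptilde P \<xi>))"
      by (intro sum_mono mult_left_mono C) auto
    also have "\<dots> \<le> D * mptilde P \<xi>"
      unfolding D_def sum_distrib_right[symmetric] mult.assoc[symmetric]
      by (intro mult_right_mono) (auto simp: mptilde_nonneg)
    finally show ?thesis .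
  qed
  moreover have "D > 0" using weights_nonneg by (simp add: D_def)
  ultimately show ?thesis unfolding weaker_def by blast
qed

text \<open>Hypoellipticity (with \<rho> > 0) forces tilde P \<le> K |P| outside a ball: all derivatives
  are dominated by P itself there.\<close>
lemma s_hypoelliptic_mptilde_bound:
  assumes "is_mpoly P" "s_hypoelliptic s P"
  obtains K A where "K \<ge> 0" "\<And>\<xi>. norm \<xi> \<ge> A \<Longrightarrow> mptilde P \<xi> \<le> K * cmod (mpeval P \<xi>)"
proof -
  obtain \<rho> C A where \<rho>: "\<rho> > 0" and C: "C > 0" and
    hyp: "\<And>\<beta> \<xi>. norm \<xi> \<ge> A \<Longrightarrow> cmod (mpeval (mpderiv \<beta> P) \<xi>)
             \<le> C * cmod (mpeval P \<xi>) * (1 + norm \<xi>) powr (- \<rho> * real (mindex_abs \<beta>))"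
    using assms(2) unfolding s_hypoelliptic_def by blast
  define K where "K = sqrt (real (card (deriv_support P))) * C"
  have "mptilde P \<xi> \<le> K * cmod (mpeval P \<xi>)" if "norm \<xi> \<ge> A" for \<xi>
  proof -
    have deriv_bound: "cmod (mpeval (mpderiv \<beta> P) \<xi>) \<le> C * cmod (mpeval P \<xi>)" for \<beta>
    proof -
      have "(1 + norm \<xi>) powr (- \<rho> * real (mindex_abs \<beta>)) \<le> (1 + norm \<xi>) powr 0"
        using \<rho> by (intro powr_mono) auto
      then have "(1 + norm \<xi>) powr (- \<rho> * real (mindex_abs \<beta>)) \<le> 1"
        by (simp add: add_nonneg_eq_0_iff)
      then show ?thesis
        using hyp[OF that, of \<beta>] C mult_left_mono[of _ 1 "C * cmod (mpeval P \<xi>)"]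
        by (simp add: order_trans)
    qed
    have "mptilde P \<xi> = L2_set (\<lambda>\<beta>. cmod (mpeval (mpderiv \<beta> P) \<xi>)) (deriv_support P)"
      by (rule mptilde_as_L2_set[OF finite_deriv_support[OF assms(1)] order_refl])
    also have "\<dots> \<le> L2_set (\<lambda>\<beta>. C * cmod (mpeval P \<xi>)) (deriv_support P)"
      by (intro L2_set_mono deriv_bound) auto
    also have "\<dots> = K * cmod (mpeval P \<xi>)"
      using C by (simp add: L2_set_constant K_def)
    finally show ?thesis .
  qed
  moreover have "K \<ge> 0" using C by (simp add: K_def)
  ultimately show ?thesis using that by blast
qed

text \<open>Near infinity this is
  immediate; on the remaining ball tilde P is bounded and tilde Q bounded below.\<close>
lemma weaker_if_dominated:
  assumes P: "is_mpoly P" "P \<noteq> (\<lambda>_. 0)"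
    and Q: "is_mpoly Q"
    and K: "K \<ge> 0" "\<And>\<xi>. norm \<xi> \<ge> A \<Longrightarrow> mptilde P \<xi> \<le> K * cmod (mpeval P \<xi>)"
    and dom: "\<epsilon> > 0" "\<And>\<xi>. norm \<xi> \<ge> A \<Longrightarrow> \<epsilon> * cmod (mpeval P \<xi>) \<le> cmod (mpeval Q \<xi>)"
  shows "weaker P Q"
proof -
  obtain \<kappa>P where \<kappa>P: "\<kappa>P > 0" "\<And>\<xi>. \<kappa>P \<le> mptilde P \<xi>"
    using mptilde_lower_bound[OF P] by blast
  have Q_nonzero: "Q \<noteq> (\<lambda>_. 0)"
  proof
    assume "Q = (\<lambda>_. 0)"
    obtain \<xi> :: "real^'a" where \<xi>: "norm \<xi> = max A 0"
      using vector_choose_size[of "max A 0"] by auto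
    have "\<epsilon> * cmod (mpeval P \<xi>) \<le> 0"
      using dom(2)[of \<xi>] \<xi> \<open>Q = (\<lambda>_. 0)\<close> by (simp add: mpeval_zero_poly)
    then have "mpeval P \<xi> = 0" using dom(1) by (simp add: mult_le_0_iff)
    then show False using K(2)[of \<xi>] \<xi> \<kappa>P(1) \<kappa>P(2)[of \<xi>] by simp
  qed
  obtain \<kappa>Q where \<kappa>Q: "\<kappa>Q > 0" "\<And>\<xi>. \<kappa>Q \<le> mptilde Q \<xi>"
    using mptilde_lower_bound[OF Q Q_nonzero] by blast
  obtain M where M: "\<And>\<xi>. norm \<xi> \<le> A \<Longrightarrow> mptilde P \<xi> \<le> M"
    using mptilde_bounded_on_ball[OF P(1)] by blast
  define C where "C = K / \<epsilon> + \<bar>M\<bar> / \<kappa>Q + 1"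
  have "mptilde P \<xi> \<le> C * mptilde Q \<xi>" for \<xi>
  proof -
    have far: "mptilde P \<xi> \<le> K / \<epsilon> * mptilde Q \<xi>" if "norm \<xi> \<ge> A"
    proof -
      have "mptilde P \<xi> \<le> K * cmod (mpeval P \<xi>)" using K(2) that .
      also have "\<dots> \<le> K * (mptilde Q \<xi> / \<epsilon>)"
        using dom(2)[OF that] dom(1) mpeval_le_mptilde[OF Q, of \<xi>] K(1)
        by (intro mult_left_mono) (auto simp: field_simps)
      finally show ?thesis by simp
    qed
    have near: "mptilde P \<xi> \<le> \<bar>M\<bar> / \<kappa>Q * mptilde Q \<xi>" if "norm \<xi> \<le> A"
    proof -
      have "mptilde P \<xi> \<le> \<bar>M\<bar> / \<kappa>Q * \<kappa>Q" using M[OF that] \<kappa>Q(1) by simp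
      also have "\<dots> \<le> \<bar>M\<bar> / \<kappa>Q * mptilde Q \<xi>" using \<kappa>Q by (intro mult_left_mono) auto
      finally show ?thesis .
    qed
    have "0 \<le> K / \<epsilon> * mptilde Q \<xi>" "0 \<le> \<bar>M\<bar> / \<kappa>Q * mptilde Q \<xi>"
      using K(1) dom(1) \<kappa>Q(1) by (simp_all add: mptilde_nonneg)
    then show ?thesis
      using far near mptilde_nonneg[of Q \<xi>] unfolding C_def distrib_right
      by (cases "norm \<xi> \<ge> A") auto
  qed
  moreover have "C > 0"
    using K(1) dom(1) \<kappa>Q(1) by (simp add: C_def add_nonneg_pos)
  ultimately show ?thesis unfolding weaker_def by blast
qed

theorem mainTheorem14:
  fixes s :: real and m r :: nat
    and Ps :: "nat \<Rightarrow> ('d::finite) mpoly"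
    and c :: "nat \<Rightarrow> real^'d \<Rightarrow> complex"
  assumes "s \<ge> 1"
    and "is_mpoly (Ps 0)" and "s_hypoelliptic s (Ps 0)" and "mpdegree (Ps 0) = m"
    and "\<forall>j\<le>r. is_mpoly (Ps j) \<and> weaker (Ps j) (Ps 0)"
    and "\<forall>a::nat \<Rightarrow> complex. (\<lambda>\<alpha>. \<Sum>j\<le>r. a j * Ps j \<alpha>) = (\<lambda>_. 0) \<longrightarrow> (\<forall>j\<le>r. a j = 0)"
    and "\<forall>Q. is_mpoly Q \<and> weaker Q (Ps 0) \<longrightarrow> (\<exists>a::nat \<Rightarrow> complex. Q = (\<lambda>\<alpha>. \<Sum>j\<le>r. a j * Ps j \<alpha>))"
    and "\<forall>j\<le>r. c j \<in> G1ap"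
    and "\<exists>\<epsilon>>0. \<exists>A\<ge>0. \<forall>x \<xi>. norm \<xi> \<ge> A \<longrightarrow>
           cmod (\<Sum>j\<le>r. c j x * mpeval (Ps j) \<xi>) \<ge> \<epsilon> * cmod (mpeval (Ps 0) \<xi>)"
  shows "constant_strength (symbol r c Ps)"
proof -
  have basis: "\<forall>j\<in>{..r}. is_mpoly (Ps j)" using assms(5) by auto
  text \<open>P0 is nonzero, being a member of a linearly independent family.\<close>
  have "(\<Sum>j\<le>r. (if j = 0 then 1 else 0) * Ps j \<alpha>) = Ps 0 \<alpha>" for \<alpha>
    by (simp add: if_distrib[of "\<lambda>z. z * _"] sum.delta cong: if_cong)
  then have P0_nonzero: "Ps 0 \<noteq> (\<lambda>_. 0)"
    using assms(6)[rule_format, of "\<lambda>j. if j = 0 then 1 else 0"] by force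
  obtain K A where K: "K \<ge> 0" "\<And>\<xi>. norm \<xi> \<ge> A \<Longrightarrow> mptilde (Ps 0) \<xi> \<le> K * cmod (mpeval (Ps 0) \<xi>)"
    using s_hypoelliptic_mptilde_bound[OF assms(2,3)] by blast
  obtain \<epsilon> A' where \<epsilon>: "\<epsilon> > 0" "\<And>x \<xi>. norm \<xi> \<ge> A' \<Longrightarrow>
      \<epsilon> * cmod (mpeval (Ps 0) \<xi>) \<le> cmod (\<Sum>j\<le>r. c j x * mpeval (Ps j) \<xi>)"
    using assms(9) by blast
  have equiv_P0: "weaker (symbol r c Ps x) (Ps 0) \<and> weaker (Ps 0) (symbol r c Ps x)" for x
  proof
    show "weaker (symbol r c Ps x) (Ps 0)"
      unfolding symbol_def using assms(5) by (intro weaker_lincomb) auto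
    show "weaker (Ps 0) (symbol r c Ps x)"
      unfolding symbol_def
      using K \<epsilon>
      by (intro weaker_if_dominated[where K=K and A="max A A'" and \<epsilon>=\<epsilon>]
          assms(2) P0_nonzero is_mpoly_lincomb basis)
        (auto simp: mpeval_lincomb[OF _ basis])
  qed
  then show ?thesis
    unfolding constant_strength_def equally_strong_def using weaker_trans by blast
qed

end
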